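(* Let $L$ be a multi-adjoint lattice, let $\mathcal{P}$ be an sMALP program over $L$, and let $\mathcal{Q}$ be a goal. Then for every symbolic substitution $\Theta$ for $\mathrm{sym}(\mathcal{P})$, the following are equivalent: (i) $\langle v;\theta\rangle$ is a fuzzy computed answer (fca) for $\mathcal{Q}$ in the MALP program $\mathcal{P}\Theta$; (ii) there exists a symbolic fuzzy computed answer (sfca) $\langle \mathcal{Q}';\theta'\rangle$ for $\mathcal{Q}$ in $\mathcal{P}$ such that $\langle \mathcal{Q}'\Theta;\theta'\rangle \to_{IS}^{*} \langle v;\theta'\rangle$, where $\theta'$ is a renaming of $\theta$.
   Context: A multi-adjoint lattice is a tuple $\langle L,\preceq,\&_1,\leftarrow_1,\dots,\&_n,\leftarrow_n\rangle$ where $\langle L,\preceq\rangle$ is a bounded complete lattice (bottom $\bot$, top $\top$), each conjunctor $\&_i$ is increasing in both arguments, each implication $\leftarrow_i$ is increasing in its first argument (consequent) and decreasing in its second (antecedent), and each $\langle \&_i,\leftarrow_i\rangle$ is an adjoint pair: for all $x,y,z\in L$, $x\preceq (y\leftarrow_i z)$ iff $(x\,\&_i\, z)\preceq y$. The lattice may also carry further connectives (conjunctions, disjunctions, aggregators); every $n$-ary connective $\varsigma$ of $L$ has a truth function $[\![\varsigma]\!]:L^n\to L$ that is monotone with $[\![\varsigma]\!](\top,\dots,\top)=\top$ and $[\![\varsigma]\!](\bot,\dots,\bot)=\bot$. Formulas: over a signature with variables, function symbols, predicate symbols, truth-degree constants (elements of $L$) and connectives of $L$, a well-formed formula is a value $v\in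 L$, an atom $p(t_1,\dots,t_n)$ with $t_i$ first-order terms, or $\varsigma(e_1,\dots,e_n)$ with $\varsigma$ a connective and $e_i$ formulas. In the symbolic language $\mathcal{L}^s_L$ one additionally allows symbolic values, symbolic adjoint pairs $\langle \&^s,\leftarrow^s\rangle$ and symbolic connectives, which are not defined on $L$ (have no truth function). An $L^s$-expression is a formula built only from values and connectives (concrete or symbolic), i.e. containing no atoms. An sMALP program over $L$ is a set of rules $(H\leftarrow_i \mathcal{B}\ \mathit{with}\ v)$ where $H$ is an atom, $\leftarrow_i$ is the implication of an adjoint pair of $L$ or of a symbolic adjoint pair, the body $\mathcal{B}$ is a formula of $\mathcal{L}^s_L$ without implications, and $v$ is an element of $L$ or a symbolic value. A fact $(H\ \mathit{with}\ v)$ is treated as $(H\leftarrow_i\top\ \mathit{with}\ v)$. A MALP program is an sMALP program with no symbolic values or connectives. A goal is a body formula. $\mathrm{sym}(\mathcal{P})$ is the set of symbolic values and connectives occurring in $\mathcal{P}$. States are pairs $\langle \mathcal{Q};\sigma\rangle$ ($\mathcal{Q}$ a symbolic goal, $\sigma$ a substitution). $\mathcal{Q}[A]$ denotes a formula with a selected atom $A$ in a context; $\mathcal{Q}[A/A']$ replaces it. Admissible steps $\to_{AS}$: (1) $\langle \mathcal{Q}[A];\sigma\rangle \to_{AS} \langle (\mathcal{Q}[A/v\,\&_i\,\mathcal{B}])\theta;\sigma\theta\rangle$ if $\theta=\mathrm{mgu}(\{H=A\})$ exists for a renamed-apart variant $(H\leftarrow_i\mathcal{B}\ \mathit{with}\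 v)$ of a rule of the program (symbolic values/connectives are not renamed), where $\&_i$ is the conjunction adjoint to $\leftarrow_i$ (for facts, $A$ is replaced by $v$ directly); (2) $\langle \mathcal{Q}[A];\sigma\rangle \to_{AS} \langle \mathcal{Q}[A/\bot];\sigma\rangle$ if no rule head unifies with $A$. A final admissible derivation $\langle\mathcal{Q};id\rangle\to_{AS}^*\langle\mathcal{Q}'';\theta\rangle$ is one where $\mathcal{Q}''$ is an $L^s$-expression; then $\langle\mathcal{Q}'';\theta$ restricted to the variables of $\mathcal{Q}\rangle$ is a symbolic admissible computed answer (saca). Interpretive steps $\to_{IS}$: $\langle \mathcal{Q}[\varsigma(r_1,\dots,r_n)];\sigma\rangle \to_{IS} \langle \mathcal{Q}[\varsigma(r_1,\dots,r_n)/r_{n+1}];\sigma\rangle$ where $\varsigma$ is a connective defined on $L$, $r_1,\dots,r_n\in L$, and $[\![\varsigma]\!](r_1,\dots,r_n)=r_{n+1}$. If, starting from a saca, $\langle\mathcal{Q}'';\sigma\rangle\to_{IS}^*\langle\mathcal{Q}';\theta\rangle$ and $\langle\mathcal{Q}';\theta\rangle$ cannot be further reduced, then $\langle\mathcal{Q}';\theta\rangle$ is a symbolic fuzzy computed answer (sfca) for the goal; if moreover $\mathcal{Q}'$ is a value of $L$, it is a fuzzy computed answer (fca). A symbolic substitution is a mapping from symbolic values and symbolic connectives to expressions built from values and connectives of $L$ (of matching kind), subject to: for a symbolic adjoint pair $\langle\&^s,\leftarrow^s\rangle$ and an adjoint pair $\langle\&_i,\leftarrow_i\rangle$ of $L$,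 $\leftarrow^s/\leftarrow_i\in\Theta$ iff $\&^s/\&_i\in\Theta$. For an expression $e$, $e\Theta$ replaces each symbolic symbol by its image; $\mathcal{P}\Theta$ is obtained by replacing every symbolic symbol in $\mathcal{P}$ by its image under $\Theta$ (when $\Theta$ covers $\mathrm{sym}(\mathcal{P})$, $\mathcal{P}\Theta$ is a MALP program). *)

theory Defs
  imports Main
begin

text \<open>Adjoint pairs are indexed by names of type 'p: cnj i is the conjunction and
  impl i y z stands for (y <-_i z).  Further connectives of L are named by 'c,
  with arity and truth function conn c (applied to a list of arguments of length arity c).\<close>

definition connective_ok :: "nat \<Rightarrow> ('a::complete_lattice list \<Rightarrow> 'a) \<Rightarrow> bool" where
  "connective_ok n f \<longleftrightarrow>
     (\<forall>xs ys. length xs = n \<and> length ys = n \<and> list_all2 (\<le>) xs ys \<longrightarrow> f xs \<le> f ys)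
   \<and> f (replicate n top) = top \<and> f (replicate n bot) = bot"

definition multi_adjoint_lattice ::
  "('p \<Rightarrow> 'a::complete_lattice \<Rightarrow> 'a \<Rightarrow> 'a) \<Rightarrow> ('p \<Rightarrow> 'a \<Rightarrow> 'a \<Rightarrow> 'a)
   \<Rightarrow> ('c \<Rightarrow> 'a list \<Rightarrow> 'a) \<Rightarrow> ('c \<Rightarrow> nat) \<Rightarrow> bool" where
  "multi_adjoint_lattice cnj impl conn arity \<longleftrightarrow>
     (\<forall>i. (\<forall>x x' y y'. x \<le> x' \<and> y \<le> y' \<longrightarrow> cnj i x y \<le> cnj i x' y')
        \<and> (\<forall>y y' z z'. y \<le> y' \<and> z' \<le> z \<longrightarrow> impl i y z \<le> impl i y' z')
        \<and> (\<forall>x y z. x \<le> impl i y z \<longleftrightarrow> cnj i x z \<le> y)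
        \<and> connective_ok 2 (\<lambda>xs. cnj i (xs ! 0) (xs ! 1)))
   \<and> (\<forall>c. connective_ok (arity c) (conn c))"

datatype ('f, 'v) trm = Var 'v | Fn 'f "('f, 'v) trm list"

type_synonym ('f, 'v) subst = "'v \<Rightarrow> ('f, 'v) trm"

fun tsubst :: "('f, 'v) subst \<Rightarrow> ('f, 'v) trm \<Rightarrow> ('f, 'v) trm" where
  "tsubst \<sigma> (Var x) = \<sigma> x"
| "tsubst \<sigma> (Fn f ts) = Fn f (map (tsubst \<sigma>) ts)"

fun tvars :: "('f, 'v) trm \<Rightarrow> 'v set" where
  "tvars (Var x) = {x}"
| "tvars (Fn f ts) = \<Union> (set (map tvars ts))"

text \<open>Composition: first sigma, then theta.\<close>
definition scomp :: "('f, 'v) subst \<Rightarrow> ('f, 'v) subst \<Rightarrow> ('f, 'v) subst" where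
  "scomp \<sigma> \<theta> = (\<lambda>x. tsubst \<theta> (\<sigma> x))"

definition sdom :: "('f, 'v) subst \<Rightarrow> 'v set" where
  "sdom \<sigma> = {x. \<sigma> x \<noteq> Var x}"

definition svars :: "('f, 'v) subst \<Rightarrow> 'v set" where
  "svars \<sigma> = sdom \<sigma> \<union> (\<Union>x\<in>sdom \<sigma>. tvars (\<sigma> x))"

definition srestrict :: "'v set \<Rightarrow> ('f, 'v) subst \<Rightarrow> ('f, 'v) subst" where
  "srestrict X \<sigma> = (\<lambda>x. if x \<in> X then \<sigma> x else Var x)"

definition unifier :: "('f, 'v) subst \<Rightarrow> 'q \<times> ('f, 'v) trm list \<Rightarrow> 'q \<times> ('f, 'v) trm list \<Rightarrow> bool" where
  "unifier \<sigma> A B \<longleftrightarrow> fst A = fst B \<and> map (tsubst \<sigma>) (snd A) = map (tsubst \<sigma>) (snd B)"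

definition is_mgu :: "('f, 'v) subst \<Rightarrow> 'q \<times> ('f, 'v) trm list \<Rightarrow> 'q \<times> ('f, 'v) trm list \<Rightarrow> bool" where
  "is_mgu \<sigma> A B \<longleftrightarrow> unifier \<sigma> A B \<and> (\<forall>\<tau>. unifier \<tau> A B \<longrightarrow> (\<exists>\<delta>. \<tau> = scomp \<sigma> \<delta>))"

definition subst_renaming_on :: "'v set \<Rightarrow> ('f, 'v) subst \<Rightarrow> ('f, 'v) subst \<Rightarrow> bool" where
  "subst_renaming_on X \<theta>' \<theta> \<longleftrightarrow>
     (\<exists>\<rho>. bij \<rho> \<and> (\<forall>x\<in>X. \<theta>' x = tsubst (Var \<circ> \<rho>) (\<theta> x)))"

text \<open>'a: lattice values, 'sv: symbolic values, 'p: adjoint pairs of L, 'sp: symbolic adjoint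
  pairs, 'c: further connectives of L, 'sc: symbolic connectives, 'q: predicate symbols,
  'f: function symbols, 'v: variables.  Concrete symbols are Inl, symbolic ones Inr.\<close>

datatype ('a, 'sv, 'p, 'sp, 'c, 'sc, 'q, 'f, 'v) form =
    Val 'a
  | SVal 'sv
  | Atom 'q "('f, 'v) trm list"
  | AConj "'p + 'sp" "('a, 'sv, 'p, 'sp, 'c, 'sc, 'q, 'f, 'v) form" "('a, 'sv, 'p, 'sp, 'c, 'sc, 'q, 'f, 'v) form"
  | Conn "'c + 'sc" "('a, 'sv, 'p, 'sp, 'c, 'sc, 'q, 'f, 'v) form list"

fun fsubst :: "('f, 'v) subst \<Rightarrow> ('a, 'sv, 'p, 'sp, 'c, 'sc, 'q, 'f, 'v) form \<Rightarrow> ('a, 'sv, 'p, 'sp, 'c, 'sc, 'q, 'f, 'v) form" where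
  "fsubst \<sigma> (Val a) = Val a"
| "fsubst \<sigma> (SVal s) = SVal s"
| "fsubst \<sigma> (Atom q ts) = Atom q (map (tsubst \<sigma>) ts)"
| "fsubst \<sigma> (AConj p e1 e2) = AConj p (fsubst \<sigma> e1) (fsubst \<sigma> e2)"
| "fsubst \<sigma> (Conn c es) = Conn c (map (fsubst \<sigma>) es)"

fun fvars :: "('a, 'sv, 'p, 'sp, 'c, 'sc, 'q, 'f, 'v) form \<Rightarrow> 'v set" where
  "fvars (Val a) = {}"
| "fvars (SVal s) = {}"
| "fvars (Atom q ts) = \<Union> (set (map tvars ts))"
| "fvars (AConj p e1 e2) = fvars e1 \<union> fvars e2"
| "fvars (Conn c es) = \<Union> (set (map fvars es))"

fun is_expr :: "('a, 'sv, 'p, 'sp, 'c, 'sc, 'q, 'f, 'v) form \<Rightarrow> bool" where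
  "is_expr (Val a) = True"
| "is_expr (SVal s) = True"
| "is_expr (Atom q ts) = False"
| "is_expr (AConj p e1 e2) = (is_expr e1 \<and> is_expr e2)"
| "is_expr (Conn c es) = list_all is_expr es"

fun concrete :: "('a, 'sv, 'p, 'sp, 'c, 'sc, 'q, 'f, 'v) form \<Rightarrow> bool" where
  "concrete (Val a) = True"
| "concrete (SVal s) = False"
| "concrete (Atom q ts) = True"
| "concrete (AConj p e1 e2) = (isl p \<and> concrete e1 \<and> concrete e2)"
| "concrete (Conn c es) = (isl c \<and> list_all concrete es)"

fun wf_form :: "('c \<Rightarrow> nat) \<Rightarrow> ('sc \<Rightarrow> nat) \<Rightarrow> ('a, 'sv, 'p, 'sp, 'c, 'sc, 'q, 'f, 'v) form \<Rightarrow> bool" where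
  "wf_form ar sar (Val a) = True"
| "wf_form ar sar (SVal s) = True"
| "wf_form ar sar (Atom q ts) = True"
| "wf_form ar sar (AConj p e1 e2) = (wf_form ar sar e1 \<and> wf_form ar sar e2)"
| "wf_form ar sar (Conn c es) =
     (length es = case_sum ar sar c \<and> list_all (wf_form ar sar) es)"

text \<open>repl s s' Q Q': Q' results from Q by replacing one occurrence of the subformula s by s'
  (this is the context notation Q[s/s']).\<close>
inductive repl :: "('a, 'sv, 'p, 'sp, 'c, 'sc, 'q, 'f, 'v) form \<Rightarrow> ('a, 'sv, 'p, 'sp, 'c, 'sc, 'q, 'f, 'v) form
   \<Rightarrow> ('a, 'sv, 'p, 'sp, 'c, 'sc, 'q, 'f, 'v) form \<Rightarrow> ('a, 'sv, 'p, 'sp, 'c, 'sc, 'q, 'f, 'v) form \<Rightarrow> bool" where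
  here: "repl s s' s s'"
| conjL: "repl s s' e e' \<Longrightarrow> repl s s' (AConj p e f) (AConj p e' f)"
| conjR: "repl s s' f f' \<Longrightarrow> repl s s' (AConj p e f) (AConj p e f')"
| conn: "repl s s' e e' \<Longrightarrow> repl s s' (Conn c (xs @ e # ys)) (Conn c (xs @ e' # ys))"

text \<open>Rule H <-_i B with v, and fact H with v.  Atoms are pairs (predicate, arguments).\<close>
datatype ('a, 'sv, 'p, 'sp, 'c, 'sc, 'q, 'f, 'v) rule =
    Rule "'q \<times> ('f, 'v) trm list" "'p + 'sp" "('a, 'sv, 'p, 'sp, 'c, 'sc, 'q, 'f, 'v) form" "'a + 'sv"
  | Fact "'q \<times> ('f, 'v) trm list" "'a + 'sv"

fun rule_head :: "('a, 'sv, 'p, 'sp, 'c, 'sc, 'q, 'f, 'v) rule \<Rightarrow> 'q \<times> ('f, 'v) trm list" where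
  "rule_head (Rule H i B w) = H"
| "rule_head (Fact H w) = H"

definition atom_vars :: "'q \<times> ('f, 'v) trm list \<Rightarrow> 'v set" where
  "atom_vars A = \<Union> (set (map tvars (snd A)))"

fun rule_vars :: "('a, 'sv, 'p, 'sp, 'c, 'sc, 'q, 'f, 'v) rule \<Rightarrow> 'v set" where
  "rule_vars (Rule H i B w) = atom_vars H \<union> fvars B"
| "rule_vars (Fact H w) = atom_vars H"

definition atom_subst :: "('f, 'v) subst \<Rightarrow> 'q \<times> ('f, 'v) trm list \<Rightarrow> 'q \<times> ('f, 'v) trm list" where
  "atom_subst \<sigma> A = (fst A, map (tsubst \<sigma>) (snd A))"

fun rule_rename :: "('v \<Rightarrow> 'v) \<Rightarrow> ('a, 'sv, 'p, 'sp, 'c, 'sc, 'q, 'f, 'v) rule \<Rightarrow> ('a, 'sv, 'p, 'sp, 'c, 'sc, 'q, 'f, 'v) rule" where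
  "rule_rename \<rho> (Rule H i B w) = Rule (atom_subst (Var \<circ> \<rho>) H) i (fsubst (Var \<circ> \<rho>) B) w"
| "rule_rename \<rho> (Fact H w) = Fact (atom_subst (Var \<circ> \<rho>) H) w"

fun weight_form :: "'a + 'sv \<Rightarrow> ('a, 'sv, 'p, 'sp, 'c, 'sc, 'q, 'f, 'v) form" where
  "weight_form (Inl a) = Val a"
| "weight_form (Inr s) = SVal s"

definition apart_variant ::
  "('a, 'sv, 'p, 'sp, 'c, 'sc, 'q, 'f, 'v) rule \<Rightarrow> ('a, 'sv, 'p, 'sp, 'c, 'sc, 'q, 'f, 'v) form \<Rightarrow> ('f, 'v) subst
   \<Rightarrow> ('a, 'sv, 'p, 'sp, 'c, 'sc, 'q, 'f, 'v) rule \<Rightarrow> bool" where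
  "apart_variant R Q \<sigma> R' \<longleftrightarrow>
     (\<exists>\<rho>. bij \<rho> \<and> R' = rule_rename \<rho> R) \<and> rule_vars R' \<inter> (fvars Q \<union> svars \<sigma>) = {}"

inductive as_step ::
  "('a::bot, 'sv, 'p, 'sp, 'c, 'sc, 'q, 'f, 'v) rule set
   \<Rightarrow> ('a, 'sv, 'p, 'sp, 'c, 'sc, 'q, 'f, 'v) form \<times> ('f, 'v) subst
   \<Rightarrow> ('a, 'sv, 'p, 'sp, 'c, 'sc, 'q, 'f, 'v) form \<times> ('f, 'v) subst \<Rightarrow> bool"
  for P where
  rule: "\<lbrakk> R \<in> P; apart_variant R Q \<sigma> (Rule H i B w);
          repl (Atom q ts) (AConj i (weight_form w) B) Q Q1; is_mgu \<theta> H (q, ts) \<rbrakk>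
        \<Longrightarrow> as_step P (Q, \<sigma>) (fsubst \<theta> Q1, scomp \<sigma> \<theta>)"
| fact: "\<lbrakk> R \<in> P; apart_variant R Q \<sigma> (Fact H w);
          repl (Atom q ts) (weight_form w) Q Q1; is_mgu \<theta> H (q, ts) \<rbrakk>
        \<Longrightarrow> as_step P (Q, \<sigma>) (fsubst \<theta> Q1, scomp \<sigma> \<theta>)"
| fail: "\<lbrakk> repl (Atom q ts) (Val bot) Q Q1;
          \<forall>R\<in>P. \<forall>R'. apart_variant R Q \<sigma> R' \<longrightarrow> \<not> (\<exists>\<tau>. unifier \<tau> (rule_head R') (q, ts)) \<rbrakk>
        \<Longrightarrow> as_step P (Q, \<sigma>) (Q1, \<sigma>)"

definition saca ::
  "('a::bot, 'sv, 'p, 'sp, 'c, 'sc, 'q, 'f, 'v) rule set \<Rightarrow> ('a, 'sv, 'p, 'sp, 'c, 'sc, 'q, 'f, 'v) form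
   \<Rightarrow> ('a, 'sv, 'p, 'sp, 'c, 'sc, 'q, 'f, 'v) form \<Rightarrow> ('f, 'v) subst \<Rightarrow> bool" where
  "saca P Q Q'' \<theta> \<longleftrightarrow>
     (\<exists>\<sigma>. (as_step P)\<^sup>*\<^sup>* (Q, Var) (Q'', \<sigma>) \<and> is_expr Q'' \<and> \<theta> = srestrict (fvars Q) \<sigma>)"

text \<open>Interpretive steps (they never change the substitution, so they are stated on formulas).\<close>
inductive is_step ::
  "('p \<Rightarrow> 'a \<Rightarrow> 'a \<Rightarrow> 'a) \<Rightarrow> ('c \<Rightarrow> 'a list \<Rightarrow> 'a) \<Rightarrow> ('c \<Rightarrow> nat)
   \<Rightarrow> ('a, 'sv, 'p, 'sp, 'c, 'sc, 'q, 'f, 'v) form \<Rightarrow> ('a, 'sv, 'p, 'sp, 'c, 'sc, 'q, 'f, 'v) form \<Rightarrow> bool"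
  for cnj conn arity where
  conj: "repl (AConj (Inl i) (Val a) (Val b)) (Val (cnj i a b)) Q Q' \<Longrightarrow> is_step cnj conn arity Q Q'"
| conn: "\<lbrakk> length rs = arity c; repl (Conn (Inl c) (map Val rs)) (Val (conn c rs)) Q Q' \<rbrakk>
        \<Longrightarrow> is_step cnj conn arity Q Q'"

definition sfca ::
  "('p \<Rightarrow> 'a::bot \<Rightarrow> 'a \<Rightarrow> 'a) \<Rightarrow> ('c \<Rightarrow> 'a list \<Rightarrow> 'a) \<Rightarrow> ('c \<Rightarrow> nat)
   \<Rightarrow> ('a, 'sv, 'p, 'sp, 'c, 'sc, 'q, 'f, 'v) rule set \<Rightarrow> ('a, 'sv, 'p, 'sp, 'c, 'sc, 'q, 'f, 'v) form
   \<Rightarrow> ('a, 'sv, 'p, 'sp, 'c, 'sc, 'q, 'f, 'v) form \<Rightarrow> ('f, 'v) subst \<Rightarrow> bool" where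
  "sfca cnj conn arity P Q Q' \<theta> \<longleftrightarrow>
     (\<exists>Q''. saca P Q Q'' \<theta> \<and> (is_step cnj conn arity)\<^sup>*\<^sup>* Q'' Q'
            \<and> \<not> (\<exists>Q2. is_step cnj conn arity Q' Q2))"

definition fca ::
  "('p \<Rightarrow> 'a::bot \<Rightarrow> 'a \<Rightarrow> 'a) \<Rightarrow> ('c \<Rightarrow> 'a list \<Rightarrow> 'a) \<Rightarrow> ('c \<Rightarrow> nat)
   \<Rightarrow> ('a, 'sv, 'p, 'sp, 'c, 'sc, 'q, 'f, 'v) rule set \<Rightarrow> ('a, 'sv, 'p, 'sp, 'c, 'sc, 'q, 'f, 'v) form
   \<Rightarrow> 'a \<Rightarrow> ('f, 'v) subst \<Rightarrow> bool" where
  "fca cnj conn arity P Q v \<theta> \<longleftrightarrow> sfca cnj conn arity P Q (Val v) \<theta>"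

fun rule_body_wf :: "('c \<Rightarrow> nat) \<Rightarrow> ('sc \<Rightarrow> nat) \<Rightarrow> ('a, 'sv, 'p, 'sp, 'c, 'sc, 'q, 'f, 'v) rule \<Rightarrow> bool" where
  "rule_body_wf ar sar (Rule H i B w) = wf_form ar sar B"
| "rule_body_wf ar sar (Fact H w) = True"

definition wf_program :: "('c \<Rightarrow> nat) \<Rightarrow> ('sc \<Rightarrow> nat) \<Rightarrow> ('a, 'sv, 'p, 'sp, 'c, 'sc, 'q, 'f, 'v) rule set \<Rightarrow> bool" where
  "wf_program ar sar P \<longleftrightarrow> (\<forall>R\<in>P. rule_body_wf ar sar R)"

fun form_symconns :: "('a, 'sv, 'p, 'sp, 'c, 'sc, 'q, 'f, 'v) form \<Rightarrow> 'sc set" where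
  "form_symconns (Val a) = {}"
| "form_symconns (SVal s) = {}"
| "form_symconns (Atom q ts) = {}"
| "form_symconns (AConj p e1 e2) = form_symconns e1 \<union> form_symconns e2"
| "form_symconns (Conn c es) = (case c of Inl _ \<Rightarrow> {} | Inr s \<Rightarrow> {s}) \<union> \<Union> (set (map form_symconns es))"

fun rule_symconns :: "('a, 'sv, 'p, 'sp, 'c, 'sc, 'q, 'f, 'v) rule \<Rightarrow> 'sc set" where
  "rule_symconns (Rule H i B w) = form_symconns B"
| "rule_symconns (Fact H w) = {}"

definition prog_symconns :: "('a, 'sv, 'p, 'sp, 'c, 'sc, 'q, 'f, 'v) rule set \<Rightarrow> 'sc set" where
  "prog_symconns P = (\<Union>R\<in>P. rule_symconns R)"

text \<open>A symbolic substitution Theta is given by three maps: symbolic values to values of L,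
  symbolic adjoint pairs to adjoint pairs of L (so that &^s/&_i and <-^s/<-_i are mapped
  together), and symbolic connectives to connectives of L.\<close>
fun inst_form :: "('sv \<Rightarrow> 'a) \<Rightarrow> ('sp \<Rightarrow> 'p) \<Rightarrow> ('sc \<Rightarrow> 'c)
   \<Rightarrow> ('a, 'sv, 'p, 'sp, 'c, 'sc, 'q, 'f, 'v) form \<Rightarrow> ('a, 'sv, 'p, 'sp, 'c, 'sc, 'q, 'f, 'v) form" where
  "inst_form tv tp tc (Val a) = Val a"
| "inst_form tv tp tc (SVal s) = Val (tv s)"
| "inst_form tv tp tc (Atom q ts) = Atom q ts"
| "inst_form tv tp tc (AConj p e1 e2) =
     AConj (Inl (case_sum id tp p)) (inst_form tv tp tc e1) (inst_form tv tp tc e2)"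
| "inst_form tv tp tc (Conn c es) = Conn (Inl (case_sum id tc c)) (map (inst_form tv tp tc) es)"

fun inst_rule :: "('sv \<Rightarrow> 'a) \<Rightarrow> ('sp \<Rightarrow> 'p) \<Rightarrow> ('sc \<Rightarrow> 'c)
   \<Rightarrow> ('a, 'sv, 'p, 'sp, 'c, 'sc, 'q, 'f, 'v) rule \<Rightarrow> ('a, 'sv, 'p, 'sp, 'c, 'sc, 'q, 'f, 'v) rule" where
  "inst_rule tv tp tc (Rule H i B w) =
     Rule H (Inl (case_sum id tp i)) (inst_form tv tp tc B) (Inl (case_sum id tv w))"
| "inst_rule tv tp tc (Fact H w) = Fact H (Inl (case_sum id tv w))"

definition inst_prog :: "('sv \<Rightarrow> 'a) \<Rightarrow> ('sp \<Rightarrow> 'p) \<Rightarrow> ('sc \<Rightarrow> 'c)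
   \<Rightarrow> ('a, 'sv, 'p, 'sp, 'c, 'sc, 'q, 'f, 'v) rule set \<Rightarrow> ('a, 'sv, 'p, 'sp, 'c, 'sc, 'q, 'f, 'v) rule set" where
  "inst_prog tv tp tc P = inst_rule tv tp tc ` P"

definition symbolic_subst_for ::
  "('c \<Rightarrow> nat) \<Rightarrow> ('sc \<Rightarrow> nat) \<Rightarrow> ('a, 'sv, 'p, 'sp, 'c, 'sc, 'q, 'f, 'v) rule set
   \<Rightarrow> ('sv \<Rightarrow> 'a) \<Rightarrow> ('sp \<Rightarrow> 'p) \<Rightarrow> ('sc \<Rightarrow> 'c) \<Rightarrow> bool" where
  "symbolic_subst_for ar sar P tv tp tc \<longleftrightarrow> (\<forall>s\<in>prog_symconns P. ar (tc s) = sar s)"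

end

theory Submission
  imports Defs
begin

text \<open>Instantiating the symbolic symbols commutes with every ingredient of an admissible step:
  renaming apart and unification (symbols are never renamed and occur in no head), replacement of
  the selected atom, and application of the mgu.  Hence the admissible derivations of \<open>P\<close> and of
  \<open>P\<Theta>\<close> correspond step by step with the same substitutions, and \<open>\<theta>'\<close> can be taken to be
  \<open>\<theta>\<close> itself.  For the interpretive phase a partial evaluation function is invariant under
  interpretive steps, and a formula reduces to the value \<open>v\<close> iff it evaluates to \<open>v\<close>; so an
  irreducible form of a symbolic answer still reduces, after instantiation, to the value of the
  instantiated answer.\<close>

subsection \<open>Instantiation of symbolic symbols\<close>

lemma tsubst_Var [simp]: "tsubst Var t = t"
  by (induction t) (auto simp: map_idI)

lemma inst_form_concrete: "concrete X \<Longrightarrow> inst_form tv tp tc X = X"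
  by (induction X) (auto simp: isl_def list_all_iff map_idI)

lemma fvars_inst_form [simp]: "fvars (inst_form tv tp tc X) = fvars X"
  by (induction X) auto

lemma is_expr_inst_form [simp]: "is_expr (inst_form tv tp tc X) = is_expr X"
  by (induction X) (auto simp: list_all_iff)

lemma fsubst_inst_form: "fsubst \<theta> (inst_form tv tp tc X) = inst_form tv tp tc (fsubst \<theta> X)"
  by (induction X) auto

lemma inst_form_eq_Atom_iff [simp]: "inst_form tv tp tc X = Atom q ts \<longleftrightarrow> X = Atom q ts"
  by (cases X) auto

lemma rule_vars_inst_rule [simp]: "rule_vars (inst_rule tv tp tc R) = rule_vars R"
  by (cases R) auto

lemma rule_head_inst_rule [simp]: "rule_head (inst_rule tv tp tc R) = rule_head R"
  by (cases R) auto

lemma rule_rename_inst_rule: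
  "rule_rename \<rho> (inst_rule tv tp tc R) = inst_rule tv tp tc (rule_rename \<rho> R)"
  by (cases R) (auto simp: fsubst_inst_form)

lemma repl_inst_form:
  "repl s s' X Y \<Longrightarrow>
   repl (inst_form tv tp tc s) (inst_form tv tp tc s') (inst_form tv tp tc X) (inst_form tv tp tc Y)"
  by (induction rule: repl.induct) (auto intro: repl.intros)

text \<open>Conversely, a replacement of an atom inside an instance is the instance of a replacement,
  since instantiation does not touch atoms.\<close>
lemma repl_Atom_inst_form_lift:
  fixes X :: "('a, 'sv, 'p, 'sp, 'c, 'sc, 'q, 'f, 'v) form"
  assumes "repl (Atom q ts) (inst_form tv tp tc t') (inst_form tv tp tc X) Y"
  shows "\<exists>X'. repl (Atom q ts) t' X X' \<and> inst_form tv tp tc X' = Y"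
  using assms
proof (induction "Atom q ts :: ('a, 'sv, 'p, 'sp, 'c, 'sc, 'q, 'f, 'v) form"
    "inst_form tv tp tc t'" "inst_form tv tp tc X" Y arbitrary: X rule: repl.induct)
  case here
  then show ?case by (metis inst_form_eq_Atom_iff repl.here)
next
  case (conjL e e' p f)
  then obtain p0 e0 f0 where X: "X = AConj p0 e0 f0" by (cases X) auto
  with conjL obtain e0' where "repl (Atom q ts) t' e0 e0'" "inst_form tv tp tc e0' = e'" by auto
  with conjL.hyps X show ?case by (auto intro!: exI[of _ "AConj p0 e0' f0"] repl.conjL)
next
  case (conjR f f' p e)
  then obtain p0 e0 f0 where X: "X = AConj p0 e0 f0" by (cases X) auto
  with conjR obtain f0' where "repl (Atom q ts) t' f0 f0'" "inst_form tv tp tc f0' = f'" by auto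
  with conjR.hyps X show ?case by (auto intro!: exI[of _ "AConj p0 e0 f0'"] repl.conjR)
next
  case (conn e e' c xs ys)
  then obtain c0 es0 where X: "X = Conn c0 es0" by (cases X) auto
  with conn.hyps have "map (inst_form tv tp tc) es0 = xs @ e # ys" by auto
  then obtain xs0 e0 ys0 where es0: "es0 = xs0 @ e0 # ys0"
    "map (inst_form tv tp tc) xs0 = xs" "inst_form tv tp tc e0 = e" "map (inst_form tv tp tc) ys0 = ys"
    by (auto simp: map_eq_append_conv)
  with conn obtain e0' where "repl (Atom q ts) t' e0 e0'" "inst_form tv tp tc e0' = e'" by auto
  with conn.hyps X es0 show ?case
    by (auto intro!: exI[of _ "Conn c0 (xs0 @ e0' # ys0)"] repl.conn)
qed

subsection \<open>Interpretive steps\<close>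

fun eval_form :: "('p \<Rightarrow> 'a \<Rightarrow> 'a \<Rightarrow> 'a) \<Rightarrow> ('c \<Rightarrow> 'a list \<Rightarrow> 'a) \<Rightarrow> ('c \<Rightarrow> nat)
   \<Rightarrow> ('a, 'sv, 'p, 'sp, 'c, 'sc, 'q, 'f, 'v) form \<Rightarrow> 'a option" where
  "eval_form cnj conn arity (Val a) = Some a"
| "eval_form cnj conn arity (SVal s) = None"
| "eval_form cnj conn arity (Atom q ts) = None"
| "eval_form cnj conn arity (AConj p e1 e2) = (case p of
      Inl i \<Rightarrow> (case (eval_form cnj conn arity e1, eval_form cnj conn arity e2) of
                  (Some a, Some b) \<Rightarrow> Some (cnj i a b) | _ \<Rightarrow> None)
    | Inr _ \<Rightarrow> None)"
| "eval_form cnj conn arity (Conn c es) = (case c of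
      Inl c' \<Rightarrow> (let os = map (eval_form cnj conn arity) es in
                 if length es = arity c' \<and> None \<notin> set os then Some (conn c' (map the os)) else None)
    | Inr _ \<Rightarrow> None)"

lemma is_step_inst_form:
  "is_step cnj conn arity X Y \<Longrightarrow>
   is_step cnj conn arity (inst_form tv tp tc X) (inst_form tv tp tc Y)"
proof (induction rule: is_step.induct)
  case (conj i a b Q Q')
  then show ?case using repl_inst_form[OF conj] by (auto intro: is_step.conj)
next
  case (conn rs c Q Q')
  then show ?case
    using repl_inst_form[OF conn(2), of tv tp tc] by (auto intro: is_step.conn simp: comp_def)
qed

lemma is_steps_inst_form:
  "(is_step cnj conn arity)\<^sup>*\<^sup>* X Y \<Longrightarrow>
   (is_step cnj conn arity)\<^sup>*\<^sup>* (inst_form tv tp tc X) (inst_form tv tp tc Y)"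
  by (induction rule: rtranclp_induct) (auto intro: rtranclp.rtrancl_into_rtrancl is_step_inst_form)

lemma eval_form_repl:
  "repl s s' X Y \<Longrightarrow> eval_form cnj conn arity s = eval_form cnj conn arity s' \<Longrightarrow>
   eval_form cnj conn arity X = eval_form cnj conn arity Y"
  by (induction rule: repl.induct) (auto split: sum.splits option.splits simp: Let_def)

lemma eval_form_is_steps:
  "(is_step cnj conn arity)\<^sup>*\<^sup>* X Y \<Longrightarrow> eval_form cnj conn arity X = eval_form cnj conn arity Y"
proof (induction rule: rtranclp_induct)
  case (step Y Z)
  from step.hyps(2) have "eval_form cnj conn arity Y = eval_form cnj conn arity Z"
    by cases (auto elim!: eval_form_repl simp: Let_def comp_def)
  with step.IH show ?case by simp
qed simp

lemma repl_trans:
  assumes "repl r r' e e'" and "repl e e' X Y"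
  shows "repl r r' X Y"
  using assms(2,1) by induction (simp_all add: repl.conjL repl.conjR repl.conn)

lemma is_steps_context:
  assumes hole: "\<And>e e'. repl e e' (C e) (C e')" and "(is_step cnj conn arity)\<^sup>*\<^sup>* X Y"
  shows "(is_step cnj conn arity)\<^sup>*\<^sup>* (C X) (C Y)"
  using assms(2)
proof (induction rule: rtranclp_induct)
  case (step Y Z)
  from step.hyps(2) have "is_step cnj conn arity (C Y) (C Z)"
    by cases (auto intro: is_step.intros repl_trans[OF _ hole])
  with step.IH show ?case by simp
qed simp

lemma is_steps_Conn_args:
  assumes "\<forall>e\<in>set es. (is_step cnj conn arity)\<^sup>*\<^sup>* e (Val (g e))"
  shows "(is_step cnj conn arity)\<^sup>*\<^sup>* (Conn c (xs @ es)) (Conn c (xs @ map (Val \<circ> g) es))"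
  using assms
proof (induction es arbitrary: xs)
  case (Cons e es)
  have "(is_step cnj conn arity)\<^sup>*\<^sup>* (Conn c (xs @ e # es)) (Conn c (xs @ Val (g e) # es))"
    using Cons.prems by (auto intro: is_steps_context repl.conn[OF repl.here])
  also have "(is_step cnj conn arity)\<^sup>*\<^sup>* \<dots> (Conn c (xs @ map (Val \<circ> g) (e # es)))"
    using Cons.IH[of "xs @ [Val (g e)]"] Cons.prems by (simp add: comp_def)
  finally show ?case .
qed simp

lemma is_steps_to_eval_form:
  fixes X :: "('a, 'sv, 'p, 'sp, 'c, 'sc, 'q, 'f, 'v) form"
  shows "eval_form cnj conn arity X = Some v \<Longrightarrow> (is_step cnj conn arity)\<^sup>*\<^sup>* X (Val v)"
proof (induction X arbitrary: v)
  case (AConj p e1 e2)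
  then obtain i a b where p: "p = Inl i" and a: "eval_form cnj conn arity e1 = Some a"
    and b: "eval_form cnj conn arity e2 = Some b" and v: "v = cnj i a b"
    by (auto split: sum.splits option.splits)
  have "(is_step cnj conn arity)\<^sup>*\<^sup>* (AConj p e1 e2) (AConj p (Val a) e2)"
    using AConj.IH(1)[OF a] by (auto intro: is_steps_context repl.conjL[OF repl.here])
  also have "(is_step cnj conn arity)\<^sup>*\<^sup>* \<dots> (AConj p (Val a) (Val b))"
    using AConj.IH(2)[OF b] by (auto intro: is_steps_context repl.conjR[OF repl.here])
  also have "is_step cnj conn arity \<dots> (Val v)"
    unfolding p v by (rule is_step.conj[OF repl.here])
  finally show ?case .
next
  case (Conn c es)
  define g where "g e = the (eval_form cnj conn arity e)"
    for e :: "('a, 'sv, 'p, 'sp, 'c, 'sc, 'q, 'f, 'v) form"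
  obtain c' where c: "c = Inl c'" using Conn.prems by (cases c) auto
  have len: "length es = arity c'" and defined: "None \<notin> eval_form cnj conn arity ` set es"
    and v: "v = conn c' (map g es)"
    using Conn.prems unfolding c g_def by (simp_all add: Let_def comp_def split: if_splits)
  have "\<forall>e\<in>set es. (is_step cnj conn arity)\<^sup>*\<^sup>* e (Val (g e))"
    using Conn.IH defined unfolding g_def by (metis image_eqI option.collapse)
  then have "(is_step cnj conn arity)\<^sup>*\<^sup>* (Conn c es) (Conn c (map Val (map g es)))"
    using is_steps_Conn_args[of es _ _ _ g c "[]"] by simp
  also have "is_step cnj conn arity \<dots> (Val v)"
    unfolding c v by (rule is_step.conn[OF _ repl.here]) (simp add: len)
  finally show ?case .
qed simp_all

lemma is_steps_to_Val_iff:
  "(is_step cnj conn arity)\<^sup>*\<^sup>* X (Val v) \<longleftrightarrow> eval_form cnj conn arity X = Some v"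
  using eval_form_is_steps is_steps_to_eval_form by fastforce

lemma repl_Val_source: "repl s s' (Val v) Y \<Longrightarrow> s = Val v"
  by (erule repl.cases) auto

lemma is_step_Val_irreducible: "\<not> is_step cnj conn arity (Val v) Y"
  by (auto elim!: is_step.cases dest: repl_Val_source)

lemma repl_size_less: "repl s s' X Y \<Longrightarrow> size s' < size s \<Longrightarrow> size Y < size X"
  by (induction rule: repl.induct) simp_all

lemma is_step_size_less: "is_step cnj conn arity X Y \<Longrightarrow> size Y < size X"
  by (auto elim!: is_step.cases repl_size_less)

lemma is_steps_irreducible_exists:
  "\<exists>Y. (is_step cnj conn arity)\<^sup>*\<^sup>* X Y \<and> \<not> (\<exists>Z. is_step cnj conn arity Y Z)"
proof (induction X rule: measure_induct_rule[where f = size])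
  case (less X)
  show ?case
  proof (cases "\<exists>Z. is_step cnj conn arity X Z")
    case True
    then obtain Z where Z: "is_step cnj conn arity X Z" by blast
    with less is_step_size_less obtain Y where
      "(is_step cnj conn arity)\<^sup>*\<^sup>* Z Y" "\<not> (\<exists>W. is_step cnj conn arity Y W)" by blast
    with Z show ?thesis by (meson converse_rtranclp_into_rtranclp)
  qed auto
qed

subsection \<open>Admissible steps\<close>

fun rule_resolvent :: "('a, 'sv, 'p, 'sp, 'c, 'sc, 'q, 'f, 'v) rule
   \<Rightarrow> ('a, 'sv, 'p, 'sp, 'c, 'sc, 'q, 'f, 'v) form" where
  "rule_resolvent (Rule H i B w) = AConj i (weight_form w) B"
| "rule_resolvent (Fact H w) = weight_form w"

definition no_unifiable_variant :: "('a, 'sv, 'p, 'sp, 'c, 'sc, 'q, 'f, 'v) rule set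
   \<Rightarrow> ('a, 'sv, 'p, 'sp, 'c, 'sc, 'q, 'f, 'v) form \<Rightarrow> ('f, 'v) subst \<Rightarrow> 'q \<times> ('f, 'v) trm list \<Rightarrow> bool" where
  "no_unifiable_variant P Q \<sigma> A \<longleftrightarrow>
     (\<forall>R\<in>P. \<forall>R'. apart_variant R Q \<sigma> R' \<longrightarrow> \<not> (\<exists>\<tau>. unifier \<tau> (rule_head R') A))"

lemma as_step_resolve:
  assumes "R \<in> P" "apart_variant R Q \<sigma> R'" "repl (Atom q ts) (rule_resolvent R') Q Q1"
    and "is_mgu \<theta> (rule_head R') (q, ts)"
  shows "as_step P (Q, \<sigma>) (fsubst \<theta> Q1, scomp \<sigma> \<theta>)"
  using assms by (cases R') (auto intro: as_step.rule as_step.fact)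

lemma as_step_fail:
  "repl (Atom q ts) (Val bot) Q Q1 \<Longrightarrow> no_unifiable_variant P Q \<sigma> (q, ts) \<Longrightarrow>
   as_step P (Q, \<sigma>) (Q1, \<sigma>)"
  unfolding no_unifiable_variant_def by (rule as_step.fail)

lemma as_step_cases [consumes 1, case_names resolve fail]:
  assumes "as_step P (Q, \<sigma>) (Q2, \<sigma>2)"
  obtains R R' q ts Q1 \<theta> where "R \<in> P" "apart_variant R Q \<sigma> R'"
    "repl (Atom q ts) (rule_resolvent R') Q Q1" "is_mgu \<theta> (rule_head R') (q, ts)"
    "Q2 = fsubst \<theta> Q1" "\<sigma>2 = scomp \<sigma> \<theta>"
  | q ts where "repl (Atom q ts) (Val bot) Q Q2" "\<sigma>2 = \<sigma>" "no_unifiable_variant P Q \<sigma> (q, ts)"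
  using assms
proof cases
  case (rule R H i B w q ts Q1 \<theta>)
  then show thesis by (intro that(1)[of R "Rule H i B w" q ts Q1 \<theta>]) simp_all
next
  case (fact R H w q ts Q1 \<theta>)
  then show thesis by (intro that(1)[of R "Fact H w" q ts Q1 \<theta>]) simp_all
next
  case (fail q ts)
  then show thesis by (intro that(2)[of q ts]) (simp_all add: no_unifiable_variant_def)
qed

lemma rule_resolvent_inst_rule:
  "rule_resolvent (inst_rule tv tp tc R) = inst_form tv tp tc (rule_resolvent R)"
  by (cases R rule: rule_resolvent.cases) (auto split: sum.split)

lemma apart_variant_inst_rule:
  "apart_variant R X \<sigma> R' \<Longrightarrow>
   apart_variant (inst_rule tv tp tc R) (inst_form tv tp tc X) \<sigma> (inst_rule tv tp tc R')"
  unfolding apart_variant_def by (auto simp: rule_rename_inst_rule)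

text \<open>Renamed-apart variants of an instantiated rule are instantiated variants of the rule,
  because the symbolic symbols are not renamed.\<close>
lemma apart_variant_of_inst_rule:
  assumes "apart_variant (inst_rule tv tp tc R) (inst_form tv tp tc X) \<sigma> R''"
  obtains R' where "R'' = inst_rule tv tp tc R'" "apart_variant R X \<sigma> R'"
proof -
  from assms obtain \<rho> where "bij \<rho>" "R'' = rule_rename \<rho> (inst_rule tv tp tc R)"
    "rule_vars R'' \<inter> (fvars X \<union> svars \<sigma>) = {}"
    unfolding apart_variant_def by auto
  then show thesis
    by (intro that[of "rule_rename \<rho> R"]) (auto simp: apart_variant_def rule_rename_inst_rule)
qed

lemma no_unifiable_variant_inst_prog_iff:
  "no_unifiable_variant (inst_prog tv tp tc P) (inst_form tv tp tc X) \<sigma> A \<longleftrightarrow>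
   no_unifiable_variant P X \<sigma> A"
proof
  assume inst: "no_unifiable_variant (inst_prog tv tp tc P) (inst_form tv tp tc X) \<sigma> A"
  show "no_unifiable_variant P X \<sigma> A"
    unfolding no_unifiable_variant_def
  proof (intro ballI allI impI)
    fix R R' assume "R \<in> P" "apart_variant R X \<sigma> R'"
    then show "\<not> (\<exists>\<tau>. unifier \<tau> (rule_head R') A)"
      using inst apart_variant_inst_rule[of R X \<sigma> R' tv tp tc]
      unfolding no_unifiable_variant_def inst_prog_def by fastforce
  qed
next
  assume plain: "no_unifiable_variant P X \<sigma> A"
  show "no_unifiable_variant (inst_prog tv tp tc P) (inst_form tv tp tc X) \<sigma> A"
    unfolding no_unifiable_variant_def inst_prog_def
  proof (intro ballI allI impI)
    fix R R'' assume "R \<in> inst_rule tv tp tc ` P" "apart_variant R (inst_form tv tp tc X) \<sigma> R''"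
    then obtain R0 R' where "R0 \<in> P" "R'' = inst_rule tv tp tc R'" "apart_variant R0 X \<sigma> R'"
      by (auto elim: apart_variant_of_inst_rule)
    then show "\<not> (\<exists>\<tau>. unifier \<tau> (rule_head R'') A)"
      using plain unfolding no_unifiable_variant_def by auto
  qed
qed

lemma as_step_inst_prog_iff:
  "as_step (inst_prog tv tp tc P) (inst_form tv tp tc X, \<sigma>) (Z, \<sigma>2) \<longleftrightarrow>
   (\<exists>X2. as_step P (X, \<sigma>) (X2, \<sigma>2) \<and> Z = inst_form tv tp tc X2)"
  (is "?inst \<longleftrightarrow> ?lifted")
proof
  assume ?inst
  then show ?lifted
  proof (cases rule: as_step_cases)
    case (resolve R R'' q ts Q1 \<theta>)
    then obtain R0 where R0: "R0 \<in> P" "R = inst_rule tv tp tc R0" by (auto simp: inst_prog_def)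
    with resolve obtain R' where R': "R'' = inst_rule tv tp tc R'" "apart_variant R0 X \<sigma> R'"
      by (auto elim: apart_variant_of_inst_rule)
    with resolve obtain X1 where "repl (Atom q ts) (rule_resolvent R') X X1"
      "inst_form tv tp tc X1 = Q1"
      by (auto simp: rule_resolvent_inst_rule dest: repl_Atom_inst_form_lift)
    with resolve R0 R' show ?lifted
      by (auto intro!: as_step_resolve simp: fsubst_inst_form)
  next
    case (fail q ts)
    then obtain X1 where "repl (Atom q ts) (Val bot) X X1" "inst_form tv tp tc X1 = Z"
      using repl_Atom_inst_form_lift[of q ts tv tp tc "Val bot"] by auto
    with fail show ?lifted
      by (auto intro!: as_step_fail simp: no_unifiable_variant_inst_prog_iff)
  qed
next
  assume ?lifted
  then obtain X2 where step: "as_step P (X, \<sigma>) (X2, \<sigma>2)" and Z: "Z = inst_form tv tp tc X2"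
    by blast
  from step show ?inst
  proof (cases rule: as_step_cases)
    case (resolve R R' q ts Q1 \<theta>)
    have "as_step (inst_prog tv tp tc P) (inst_form tv tp tc X, \<sigma>)
      (fsubst \<theta> (inst_form tv tp tc Q1), scomp \<sigma> \<theta>)"
    proof (rule as_step_resolve)
      show "inst_rule tv tp tc R \<in> inst_prog tv tp tc P"
        using resolve(1) by (simp add: inst_prog_def)
      show "apart_variant (inst_rule tv tp tc R) (inst_form tv tp tc X) \<sigma> (inst_rule tv tp tc R')"
        by (rule apart_variant_inst_rule[OF resolve(2)])
      show "repl (Atom q ts) (rule_resolvent (inst_rule tv tp tc R')) (inst_form tv tp tc X)
          (inst_form tv tp tc Q1)"
        using repl_inst_form[OF resolve(3)] by (simp add: rule_resolvent_inst_rule)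
      show "is_mgu \<theta> (rule_head (inst_rule tv tp tc R')) (q, ts)"
        using resolve(4) by simp
    qed
    then show ?inst using resolve(5,6) by (simp add: Z fsubst_inst_form)
  next
    case (fail q ts)
    then show ?inst
      using repl_inst_form[OF fail(1), of tv tp tc]
      by (auto intro!: as_step_fail simp: Z no_unifiable_variant_inst_prog_iff)
  qed
qed

lemma as_steps_inst_prog_iff:
  "(as_step (inst_prog tv tp tc P))\<^sup>*\<^sup>* (inst_form tv tp tc X, \<sigma>) (Z, \<sigma>2) \<longleftrightarrow>
   (\<exists>X2. (as_step P)\<^sup>*\<^sup>* (X, \<sigma>) (X2, \<sigma>2) \<and> Z = inst_form tv tp tc X2)"
proof
  assume "(as_step (inst_prog tv tp tc P))\<^sup>*\<^sup>* (inst_form tv tp tc X, \<sigma>) (Z, \<sigma>2)"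
  then show "\<exists>X2. (as_step P)\<^sup>*\<^sup>* (X, \<sigma>) (X2, \<sigma>2) \<and> Z = inst_form tv tp tc X2"
  proof (induction rule: rtranclp_induct2)
    case (step Z1 \<sigma>1 Z2 \<sigma>2)
    then obtain X1 where "(as_step P)\<^sup>*\<^sup>* (X, \<sigma>) (X1, \<sigma>1)" "Z1 = inst_form tv tp tc X1" by blast
    with step.hyps(2) show ?case
      by (auto simp: as_step_inst_prog_iff intro: rtranclp.rtrancl_into_rtrancl)
  qed auto
next
  assume "\<exists>X2. (as_step P)\<^sup>*\<^sup>* (X, \<sigma>) (X2, \<sigma>2) \<and> Z = inst_form tv tp tc X2"
  then obtain X2 where steps: "(as_step P)\<^sup>*\<^sup>* (X, \<sigma>) (X2, \<sigma>2)"
    and Z: "Z = inst_form tv tp tc X2" by blast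
  from steps have "(as_step (inst_prog tv tp tc P))\<^sup>*\<^sup>* (inst_form tv tp tc X, \<sigma>)
    (inst_form tv tp tc X2, \<sigma>2)"
  proof (induction rule: rtranclp_induct2)
    case (step X1 \<sigma>1 X3 \<sigma>3)
    then have "as_step (inst_prog tv tp tc P) (inst_form tv tp tc X1, \<sigma>1) (inst_form tv tp tc X3, \<sigma>3)"
      by (auto simp: as_step_inst_prog_iff)
    with step.IH show ?case by (rule rtranclp.rtrancl_into_rtrancl)
  qed simp
  with Z show "(as_step (inst_prog tv tp tc P))\<^sup>*\<^sup>* (inst_form tv tp tc X, \<sigma>) (Z, \<sigma>2)"
    by simp
qed

lemma saca_inst_prog_iff:
  assumes "concrete Q"
  shows "saca (inst_prog tv tp tc P) Q Z \<theta> \<longleftrightarrow> (\<exists>X. saca P Q X \<theta> \<and> Z = inst_form tv tp tc X)"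
  using as_steps_inst_prog_iff[of tv tp tc P Q Var Z]
  unfolding saca_def inst_form_concrete[OF assms] by fastforce

lemma subst_renaming_on_refl: "subst_renaming_on X \<theta> \<theta>"
  unfolding subst_renaming_on_def by (rule exI[of _ id]) simp

theorem theorem1:
  fixes cnj impl :: "'p \<Rightarrow> 'a::complete_lattice \<Rightarrow> 'a \<Rightarrow> 'a"
    and conn :: "'c \<Rightarrow> 'a list \<Rightarrow> 'a" and arity :: "'c \<Rightarrow> nat" and sarity :: "'sc \<Rightarrow> nat"
    and P :: "('a, 'sv, 'p, 'sp, 'c, 'sc, 'q, 'f, 'v) rule set"
    and Q :: "('a, 'sv, 'p, 'sp, 'c, 'sc, 'q, 'f, 'v) form"
    and tv :: "'sv \<Rightarrow> 'a" and tp :: "'sp \<Rightarrow> 'p" and tc :: "'sc \<Rightarrow> 'c"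
  assumes "multi_adjoint_lattice cnj impl conn arity"
    and "wf_program arity sarity P"
    and "wf_form arity sarity Q" and "concrete Q"
    and "symbolic_subst_for arity sarity P tv tp tc"
  shows "(\<forall>v \<theta>. fca cnj conn arity (inst_prog tv tp tc P) Q v \<theta> \<longrightarrow>
             (\<exists>Q' \<theta>'. sfca cnj conn arity P Q Q' \<theta>'
                  \<and> (is_step cnj conn arity)\<^sup>*\<^sup>* (inst_form tv tp tc Q') (Val v)
                  \<and> subst_renaming_on (fvars Q) \<theta>' \<theta>))
       \<and> (\<forall>v Q' \<theta>'. sfca cnj conn arity P Q Q' \<theta>'
                  \<and> (is_step cnj conn arity)\<^sup>*\<^sup>* (inst_form tv tp tc Q') (Val v) \<longrightarrow>
             (\<exists>\<theta>. fca cnj conn arity (inst_prog tv tp tc P) Q v \<theta>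
                  \<and> subst_renaming_on (fvars Q) \<theta>' \<theta>))"
proof (intro conjI allI impI)
  fix v \<theta>
  assume "fca cnj conn arity (inst_prog tv tp tc P) Q v \<theta>"
  then obtain Z where "saca (inst_prog tv tp tc P) Q Z \<theta>"
    and Z_v: "(is_step cnj conn arity)\<^sup>*\<^sup>* Z (Val v)"
    unfolding fca_def sfca_def by blast
  then obtain X where saca: "saca P Q X \<theta>" and Z: "Z = inst_form tv tp tc X"
    using saca_inst_prog_iff[OF \<open>concrete Q\<close>] by blast
  obtain Q' where X_Q': "(is_step cnj conn arity)\<^sup>*\<^sup>* X Q'"
    and irreducible: "\<not> (\<exists>Z. is_step cnj conn arity Q' Z)"
    using is_steps_irreducible_exists by blast
  have "eval_form cnj conn arity (inst_form tv tp tc Q') = Some v"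
    using eval_form_is_steps[OF is_steps_inst_form[OF X_Q']] Z_v
    by (simp add: Z is_steps_to_Val_iff)
  then have "(is_step cnj conn arity)\<^sup>*\<^sup>* (inst_form tv tp tc Q') (Val v)"
    by (simp add: is_steps_to_Val_iff)
  moreover have "sfca cnj conn arity P Q Q' \<theta>"
    unfolding sfca_def using saca X_Q' irreducible by blast
  ultimately show "\<exists>Q' \<theta>'. sfca cnj conn arity P Q Q' \<theta>'
      \<and> (is_step cnj conn arity)\<^sup>*\<^sup>* (inst_form tv tp tc Q') (Val v) \<and> subst_renaming_on (fvars Q) \<theta>' \<theta>"
    using subst_renaming_on_refl by blast
next
  fix v Q' \<theta>'
  assume "sfca cnj conn arity P Q Q' \<theta>' \<and> (is_step cnj conn arity)\<^sup>*\<^sup>* (inst_form tv tp tc Q') (Val v)"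
  then obtain X where saca: "saca P Q X \<theta>'" and "(is_step cnj conn arity)\<^sup>*\<^sup>* X Q'"
    and "(is_step cnj conn arity)\<^sup>*\<^sup>* (inst_form tv tp tc Q') (Val v)"
    unfolding sfca_def by blast
  then have "(is_step cnj conn arity)\<^sup>*\<^sup>* (inst_form tv tp tc X) (Val v)"
    by (meson rtranclp_trans is_steps_inst_form)
  moreover have "saca (inst_prog tv tp tc P) Q (inst_form tv tp tc X) \<theta>'"
    using saca saca_inst_prog_iff[OF \<open>concrete Q\<close>] by blast
  ultimately have "fca cnj conn arity (inst_prog tv tp tc P) Q v \<theta>'"
    unfolding fca_def sfca_def using is_step_Val_irreducible[of cnj conn arity v] by blast
  then show "\<exists>\<theta>. fca cnj conn arity (inst_prog tv tp tc P) Q v \<theta> \<and> subst_renaming_on (fvars Q) \<theta>' \<theta>"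
    using subst_renaming_on_refl by blast
qed

end
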